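(* Let $k\ge 1$ be an integer and let $A_k=(a_{ij})_{1\le i,j\le k}$ be the $k\times k$ matrix with entries $a_{ij}=\frac{1}{2}|i-j|$. Let $C_k(\lambda)=\det(A_k-\lambda I_k)$ be its characteristic polynomial. Then $$C_k(\lambda)=(-1)^k\lambda^k\left(1-\frac{k}{4}\sum_{j=1}^{k-1}\frac{j}{j+1}\binom{k+j}{2j+1}\lambda^{-j-1}\right).$$
   Context: $I_k$ denotes the $k\times k$ identity matrix. The identity is one of polynomials in $\lambda$ (the right-hand side is a polynomial since $j+1\le k$). *)

theory Defs
  imports "Jordan_Normal_Form.Determinant"
begin

text \<open>The k x k matrix with entries a_ij = |i - j| / 2 (0-based indices; the entries
  only depend on i - j, so this is the same matrix as with 1-based indices).\<close>
definition A_mat :: "nat \<Rightarrow> real mat" where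
  "A_mat k = mat k k (\<lambda>(i, j). \<bar>real i - real j\<bar> / 2)"

definition C_charpoly :: "nat \<Rightarrow> real \<Rightarrow> real" where
  "C_charpoly k x = det (A_mat k - x \<cdot>\<^sub>m 1\<^sub>m k)"

end

theory Submission
  imports Defs
begin

text \<open>Write k = n + 1 and M = A_k - \<lambda> I_k. Conjugating M by the matrix R whose first n rows are
  e_i - e_{i+1} and whose last row is (e_0 + e_n)/2 (a product of two unitriangular matrices, so
  det R = 1) takes second differences of the entries |i - j|/2: the result R M R^T is the
  tridiagonal matrix with diagonal -1 - 2\<lambda> and off-diagonal \<lambda>, bordered by a last row and
  column supported near the two ends. The tridiagonal determinants satisfy a three-term
  recurrence solved by the binomial sums \<Sum>m. C(n+1+m, 2m+1) \<lambda>^(n-m), and expanding the bordered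
  determinant along its last row reduces the theorem to the absorption identity
  (2j+2) C(n+1+j, 2j+2) = (n-j) C(n+1+j, 2j+1).\<close>

definition even_binom_poly :: "nat \<Rightarrow> 'a::comm_ring_1 \<Rightarrow> 'a" where
  "even_binom_poly n x = (\<Sum>m\<le>n. of_nat ((n + m) choose (2 * m)) * x ^ (n - m))"

definition odd_binom_poly :: "nat \<Rightarrow> 'a::comm_ring_1 \<Rightarrow> 'a" where
  "odd_binom_poly n x = (\<Sum>m\<le>n. of_nat ((n + 1 + m) choose (2 * m + 1)) * x ^ (n - m))"

lemma times_even_binom_poly:
  "x * even_binom_poly n x = x ^ Suc n + (\<Sum>m\<le>n. of_nat ((n + 1 + m) choose (2 * m + 2)) * x ^ (n - m))"
proof -
  have "x * even_binom_poly n x = (\<Sum>m\<le>n. of_nat ((n + m) choose (2 * m)) * x ^ (Suc n - m))"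
    unfolding even_binom_poly_def sum_distrib_left
    by (rule sum.cong) (auto simp: Suc_diff_le mult_ac)
  also have "\<dots> = (\<Sum>m\<le>Suc n. of_nat ((n + m) choose (2 * m)) * x ^ (Suc n - m))"
    by (simp add: binomial_eq_0)
  also have "\<dots> = x ^ Suc n + (\<Sum>m\<le>n. of_nat ((n + 1 + m) choose (2 * m + 2)) * x ^ (n - m))"
    by (subst sum.atMost_Suc_shift) (simp add: numeral_2_eq_2 del: binomial_Suc_Suc)
  finally show ?thesis .
qed

lemma even_binom_poly_Suc: "even_binom_poly (Suc n) x = odd_binom_poly n x + x * even_binom_poly n x"
proof -
  have "even_binom_poly (Suc n) x
      = x ^ Suc n + (\<Sum>m\<le>n. of_nat ((Suc n + Suc m) choose (2 * Suc m)) * x ^ (Suc n - Suc m))"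
    unfolding even_binom_poly_def sum.atMost_Suc_shift by simp
  also have "(\<Sum>m\<le>n. of_nat ((Suc n + Suc m) choose (2 * Suc m)) * x ^ (Suc n - Suc m))
     = odd_binom_poly n x + (\<Sum>m\<le>n. of_nat ((n + 1 + m) choose (2 * m + 2)) * x ^ (n - m))"
    unfolding odd_binom_poly_def sum.distrib[symmetric]
    by (rule sum.cong) (auto simp: algebra_simps numeral_2_eq_2)
  finally show ?thesis by (simp add: times_even_binom_poly)
qed

lemma odd_binom_poly_Suc: "odd_binom_poly (Suc n) x = even_binom_poly (Suc n) x + x * odd_binom_poly n x"
proof -
  have "x * odd_binom_poly n x = (\<Sum>m\<le>Suc n. of_nat ((Suc n + m) choose (2 * m + 1)) * x ^ (Suc n - m))"
    unfolding odd_binom_poly_def sum_distrib_left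
    by (simp add: binomial_eq_0 Suc_diff_le mult_ac)
  then show ?thesis
    unfolding odd_binom_poly_def even_binom_poly_def
    by (simp add: sum.distrib[symmetric] algebra_simps)
qed

lemma odd_binom_poly_Suc_Suc:
  "odd_binom_poly (Suc (Suc n)) x = (1 + 2 * x) * odd_binom_poly (Suc n) x - x ^ 2 * odd_binom_poly n x"
  using odd_binom_poly_Suc[of "Suc n" x] even_binom_poly_Suc[of "Suc n" x] odd_binom_poly_Suc[of n x]
  by (simp add: algebra_simps power2_eq_square)

definition tridiag_mat :: "nat \<Rightarrow> 'a::comm_ring_1 \<Rightarrow> 'a \<Rightarrow> 'a mat" where
  "tridiag_mat n a b = mat n n (\<lambda>(i, j). if i = j then a else if Suc i = j \<or> Suc j = i then b else 0)"

lemma tridiag_mat_carrier [simp]: "tridiag_mat n a b \<in> carrier_mat n n"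
  by (simp add: tridiag_mat_def)

lemma dim_tridiag_mat [simp]: "dim_row (tridiag_mat n a b) = n" "dim_col (tridiag_mat n a b) = n"
  by (simp_all add: tridiag_mat_def)

lemma mat_delete_tridiag_mat_last: "mat_delete (tridiag_mat (Suc n) a b) n n = tridiag_mat n a b"
  by (rule eq_matI) (auto simp: mat_delete_def tridiag_mat_def)

lemma mat_delete_tridiag_mat_first: "mat_delete (tridiag_mat (Suc n) a b) 0 0 = tridiag_mat n a b"
  by (rule eq_matI) (auto simp: mat_delete_def tridiag_mat_def)

lemma det_tridiag_mat_1: "det (tridiag_mat 1 a b) = a"
  by (subst det_single) (auto simp: tridiag_mat_def)

lemma det_mat_delete_tridiag_mat_0_last: "det (mat_delete (tridiag_mat (Suc n) a b) 0 n) = b ^ n"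
proof -
  let ?A = "mat_delete (tridiag_mat (Suc n) a b) 0 n"
  have "upper_triangular ?A"
    unfolding upper_triangular_def by (auto simp: mat_delete_def tridiag_mat_def)
  moreover have "?A \<in> carrier_mat n n"
    by (simp add: mat_delete_def)
  ultimately have "det ?A = prod_list (diag_mat ?A)"
    by (rule det_upper_triangular)
  also have "diag_mat ?A = replicate n b"
    by (rule nth_equalityI) (auto simp: diag_mat_def mat_delete_def tridiag_mat_def)
  finally show ?thesis by simp
qed

lemma det_mat_delete_tridiag_mat_last_0: "det (mat_delete (tridiag_mat (Suc n) a b) n 0) = b ^ n"
proof -
  let ?A = "mat_delete (tridiag_mat (Suc n) a b) n 0"
  have "det ?A = prod_list (diag_mat ?A)"
    by (rule det_lower_triangular[of n]) (auto simp: mat_delete_def tridiag_mat_def)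
  also have "diag_mat ?A = replicate n b"
    by (rule nth_equalityI) (auto simp: diag_mat_def mat_delete_def tridiag_mat_def)
  finally show ?thesis by simp
qed

lemma det_tridiag_mat_Suc_Suc:
  "det (tridiag_mat (Suc (Suc n)) a b) = a * det (tridiag_mat (Suc n) a b) - b ^ 2 * det (tridiag_mat n a b)"
proof -
  let ?T = "tridiag_mat (Suc (Suc n)) a b"
  let ?B = "mat_delete ?T (Suc n) n"
  have B: "?B \<in> carrier_mat (Suc n) (Suc n)"
    by (simp add: mat_delete_def)
  have minor: "mat_delete ?B n n = tridiag_mat n a b"
    by (rule eq_matI) (auto simp: mat_delete_def tridiag_mat_def)
  have "det ?B = (\<Sum>i<Suc n. ?B $$ (i, n) * cofactor ?B i n)"
    by (rule laplace_expansion_column[OF B]) simp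
  also have "\<dots> = ?B $$ (n, n) * cofactor ?B n n"
    by (subst sum.lessThan_Suc) (auto intro!: sum.neutral simp: mat_delete_def tridiag_mat_def)
  also have "?B $$ (n, n) = b"
    by (simp add: mat_delete_def tridiag_mat_def)
  also have "cofactor ?B n n = det (tridiag_mat n a b)"
    by (simp add: cofactor_def minor)
  finally have det_B: "det ?B = b * det (tridiag_mat n a b)" .
  have "det ?T = (\<Sum>j<Suc (Suc n). ?T $$ (Suc n, j) * cofactor ?T (Suc n) j)"
    by (rule laplace_expansion_row) simp_all
  also have "\<dots> = ?T $$ (Suc n, n) * cofactor ?T (Suc n) n + ?T $$ (Suc n, Suc n) * cofactor ?T (Suc n) (Suc n)"
    by (simp add: sum.lessThan_Suc, rule sum.neutral) (auto simp: tridiag_mat_def)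
  also have "cofactor ?T (Suc n) n = - det ?B"
    by (simp add: cofactor_def)
  also have "cofactor ?T (Suc n) (Suc n) = det (tridiag_mat (Suc n) a b)"
    by (simp add: cofactor_def mat_delete_tridiag_mat_last)
  also have "?T $$ (Suc n, n) = b"
    by (simp add: tridiag_mat_def)
  also have "?T $$ (Suc n, Suc n) = a"
    by (simp add: tridiag_mat_def)
  finally show ?thesis
    by (simp add: det_B power2_eq_square)
qed

lemma det_tridiag_mat_odd_binom_poly:
  "det (tridiag_mat n (- 1 - 2 * x) x) = (- 1) ^ n * odd_binom_poly n x"
proof (induction n rule: induct_nat_012)
  case 0
  show ?case by (simp add: odd_binom_poly_def)
next
  case 1
  show ?case using det_tridiag_mat_1[of "- 1 - 2 * x" x]
    by (simp add: odd_binom_poly_def binomial_eq_0 eval_nat_numeral)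
next
  case (ge2 n)
  then show ?case
    by (simp add: det_tridiag_mat_Suc_Suc odd_binom_poly_Suc_Suc algebra_simps)
qed

definition border_vec :: "nat \<Rightarrow> real \<Rightarrow> nat \<Rightarrow> real" where
  "border_vec n x i = (if i = 0 then - x / 2 else 0) + (if i = n - 1 then x / 2 else 0)"

definition bordered_mat :: "nat \<Rightarrow> real \<Rightarrow> real mat" where
  "bordered_mat n x = mat (Suc n) (Suc n) (\<lambda>(i, j).
     if i < n \<and> j < n then tridiag_mat n (- 1 - 2 * x) x $$ (i, j)
     else if i < n then border_vec n x i
     else if j < n then border_vec n x j
     else real n / 4 - x / 2)"

lemma bordered_mat_carrier [simp]: "bordered_mat n x \<in> carrier_mat (Suc n) (Suc n)"
  by (simp add: bordered_mat_def)

lemma det_bordered_mat_delete_last_row: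
  assumes "c < n" "2 \<le> n"
  shows "det (mat_delete (bordered_mat n x) n c) =
    - x / 2 * (- 1) ^ (n - 1) * det (mat_delete (tridiag_mat n (- 1 - 2 * x) x) 0 c)
    + x / 2 * det (mat_delete (tridiag_mat n (- 1 - 2 * x) x) (n - 1) c)"
proof -
  let ?B = "mat_delete (bordered_mat n x) n c"
  have B: "?B \<in> carrier_mat n n"
    by (simp add: mat_delete_def bordered_mat_def)
  have c: "\<not> n - 1 < c"
    using assms by simp
  have minor: "mat_delete ?B i (n - 1) = mat_delete (tridiag_mat n (- 1 - 2 * x) x) i c" if "i < n" for i
    by (rule eq_matI) (use assms that in \<open>auto simp: mat_delete_def bordered_mat_def tridiag_mat_def\<close>)
  have "det ?B = (\<Sum>i<n. ?B $$ (i, n - 1) * cofactor ?B i (n - 1))"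
    by (rule laplace_expansion_column[OF B]) (use assms in auto)
  also have "\<dots> = (\<Sum>i\<in>{0, n - 1}. ?B $$ (i, n - 1) * cofactor ?B i (n - 1))"
    by (rule sum.mono_neutral_right)
      (use assms in \<open>auto simp: mat_delete_def bordered_mat_def border_vec_def\<close>)
  also have "\<dots> = ?B $$ (0, n - 1) * cofactor ?B 0 (n - 1) + ?B $$ (n - 1, n - 1) * cofactor ?B (n - 1) (n - 1)"
    using assms by simp
  also have "?B $$ (0, n - 1) = - x / 2"
    using assms c by (simp add: mat_delete_def bordered_mat_def border_vec_def)
  also have "?B $$ (n - 1, n - 1) = x / 2"
    using assms c by (simp add: mat_delete_def bordered_mat_def border_vec_def)
  also have "cofactor ?B 0 (n - 1) = (- 1) ^ (n - 1) * det (mat_delete (tridiag_mat n (- 1 - 2 * x) x) 0 c)"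
    using assms minor[of 0] by (simp add: cofactor_def)
  also have "cofactor ?B (n - 1) (n - 1) = det (mat_delete (tridiag_mat n (- 1 - 2 * x) x) (n - 1) c)"
    using assms minor[of "n - 1"] by (simp add: cofactor_def flip: mult_2)
  finally show ?thesis
    by (simp add: mult_ac)
qed

lemma det_bordered_mat:
  assumes "1 \<le> n"
  shows "det (bordered_mat n x) =
    (real n / 4 - x / 2) * det (tridiag_mat n (- 1 - 2 * x) x)
    - x ^ 2 / 2 * det (tridiag_mat (n - 1) (- 1 - 2 * x) x) + (- 1) ^ Suc n * x ^ Suc n / 2"
proof (cases "n = 1")
  case True
  have "upper_triangular (bordered_mat 1 x)"
    unfolding upper_triangular_def by (auto simp: bordered_mat_def border_vec_def)
  then have "det (bordered_mat 1 x) = prod_list (diag_mat (bordered_mat 1 x))"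
    using det_upper_triangular bordered_mat_carrier by blast
  also have "diag_mat (bordered_mat 1 x) = [- 1 - 2 * x, 1 / 4 - x / 2]"
    by (rule nth_equalityI) (auto simp: diag_mat_def bordered_mat_def tridiag_mat_def less_Suc_eq)
  finally show ?thesis
    using True det_tridiag_mat_1[of "- 1 - 2 * x" x] by (simp add: power2_eq_square)
next
  case False
  with assms obtain m where n: "n = Suc m" and m: "1 \<le> m"
    by (cases n) auto
  let ?N = "bordered_mat n x"
  have "det ?N = (\<Sum>j<Suc n. ?N $$ (n, j) * cofactor ?N n j)"
    by (rule laplace_expansion_row[OF bordered_mat_carrier]) simp
  also have "\<dots> = (\<Sum>j\<in>{0, m, n}. ?N $$ (n, j) * cofactor ?N n j)"
    by (rule sum.mono_neutral_right) (use n in \<open>auto simp: bordered_mat_def border_vec_def\<close>)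
  also have "\<dots> = ?N $$ (n, 0) * cofactor ?N n 0 + ?N $$ (n, m) * cofactor ?N n m + ?N $$ (n, n) * cofactor ?N n n"
    using n m by simp
  also have "?N $$ (n, 0) = - x / 2"
    using n m by (simp add: bordered_mat_def border_vec_def)
  also have "?N $$ (n, m) = x / 2"
    using n m by (simp add: bordered_mat_def border_vec_def)
  also have "?N $$ (n, n) = real n / 4 - x / 2"
    by (simp add: bordered_mat_def)
  also have "mat_delete ?N n n = tridiag_mat n (- 1 - 2 * x) x"
    by (rule eq_matI) (auto simp: mat_delete_def bordered_mat_def tridiag_mat_def)
  then have "cofactor ?N n n = det (tridiag_mat n (- 1 - 2 * x) x)"
    by (simp add: cofactor_def flip: mult_2)
  also have "cofactor ?N n 0 = (- 1) ^ n * det (mat_delete ?N n 0)"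
    by (simp add: cofactor_def)
  also have "cofactor ?N n m = - det (mat_delete ?N n m)"
    by (simp add: cofactor_def n)
  also have "det (mat_delete ?N n 0) = - x / 2 * (- 1) ^ m * det (tridiag_mat m (- 1 - 2 * x) x) + x / 2 * x ^ m"
    using det_bordered_mat_delete_last_row[of 0 n x] n m
    by (simp add: mat_delete_tridiag_mat_first det_mat_delete_tridiag_mat_last_0)
  also have "det (mat_delete ?N n m) = - x / 2 * (- 1) ^ m * x ^ m + x / 2 * det (tridiag_mat m (- 1 - 2 * x) x)"
    using det_bordered_mat_delete_last_row[of m n x] n m
    by (simp add: mat_delete_tridiag_mat_last det_mat_delete_tridiag_mat_0_last)
  finally show ?thesis
    by (simp add: n algebra_simps power2_eq_square)
qed

lemma index_mult_mat_sum:
  assumes "A \<in> carrier_mat m k" "B \<in> carrier_mat k p" "i < m" "j < p"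
  shows "(A * B) $$ (i, j) = (\<Sum>l<k. A $$ (i, l) * B $$ (l, j))"
  using assms by (simp add: scalar_prod_def atLeast0LessThan)

definition diff_avg_mat :: "nat \<Rightarrow> real mat" where
  "diff_avg_mat n = mat (Suc n) (Suc n) (\<lambda>(i, l).
     if i < n then (if l = i then 1 else 0) - (if l = Suc i then 1 else 0)
     else (if l = 0 then 1 / 2 else 0) + (if l = n then 1 / 2 else 0))"

definition diff_mat :: "nat \<Rightarrow> real mat" where
  "diff_mat n = mat (Suc n) (Suc n) (\<lambda>(i, j). (if j = i then 1 else 0) - (if j = Suc i then 1 else 0))"

definition half_sum_row_mat :: "nat \<Rightarrow> real mat" where
  "half_sum_row_mat n = mat (Suc n) (Suc n) (\<lambda>(i, j). (if j = i then 1 else 0) + (if i = n \<and> j < n then 1 / 2 else 0))"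

lemma diff_avg_mat_carrier [simp]: "diff_avg_mat n \<in> carrier_mat (Suc n) (Suc n)"
  by (simp add: diff_avg_mat_def)

lemma diff_mat_carrier [simp]: "diff_mat n \<in> carrier_mat (Suc n) (Suc n)"
  by (simp add: diff_mat_def)

lemma half_sum_row_mat_carrier [simp]: "half_sum_row_mat n \<in> carrier_mat (Suc n) (Suc n)"
  by (simp add: half_sum_row_mat_def)

lemma det_diff_mat: "det (diff_mat n) = 1"
proof -
  have "upper_triangular (diff_mat n)"
    unfolding upper_triangular_def by (auto simp: diff_mat_def)
  then have "det (diff_mat n) = prod_list (diag_mat (diff_mat n))"
    using det_upper_triangular diff_mat_carrier by blast
  also have "diag_mat (diff_mat n) = map (\<lambda>i. 1) [0..<Suc n]"
    unfolding diag_mat_def by (auto simp: diff_mat_def simp del: upt_Suc intro!: map_cong)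
  finally show ?thesis by (simp add: map_replicate_const)
qed

lemma det_half_sum_row_mat: "det (half_sum_row_mat n) = 1"
proof -
  have "det (half_sum_row_mat n) = prod_list (diag_mat (half_sum_row_mat n))"
    by (rule det_lower_triangular[OF _ half_sum_row_mat_carrier]) (auto simp: half_sum_row_mat_def)
  also have "diag_mat (half_sum_row_mat n) = map (\<lambda>i. 1) [0..<Suc n]"
    unfolding diag_mat_def by (auto simp: half_sum_row_mat_def simp del: upt_Suc intro!: map_cong)
  finally show ?thesis by (simp add: map_replicate_const)
qed

lemma sum_delta_mult: "(\<Sum>l<(m::nat). (if l = a then (c::real) else 0) * g l) = (if a < m then c * g a else 0)"
  by (simp add: if_distrib[of "\<lambda>t. t * g _"] cong: if_cong)

lemma half_sum_row_mat_mult_diff_mat: "half_sum_row_mat n * diff_mat n = diff_avg_mat n"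
proof (rule eq_matI)
  fix i j
  assume "i < dim_row (diff_avg_mat n)" and "j < dim_col (diff_avg_mat n)"
  then have i: "i < Suc n" and j: "j < Suc n"
    by (auto simp: diff_avg_mat_def)
  let ?d = "\<lambda>l. (if j = l then 1 else 0) - (if j = Suc l then 1 else (0::real))"
  have "(half_sum_row_mat n * diff_mat n) $$ (i, j) = (\<Sum>l<Suc n. half_sum_row_mat n $$ (i, l) * diff_mat n $$ (l, j))"
    by (rule index_mult_mat_sum[OF half_sum_row_mat_carrier diff_mat_carrier i j])
  also have "\<dots> = (\<Sum>l<Suc n. ((if l = i then 1 else 0) + (if i = n \<and> l < n then 1 / 2 else 0)) * ?d l)"
    by (rule sum.cong) (use i j in \<open>auto simp: half_sum_row_mat_def diff_mat_def\<close>)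
  also have "\<dots> = diff_avg_mat n $$ (i, j)"
  proof (cases "i < n")
    case True
    then show ?thesis
      using i j by (simp add: distrib_right sum.distrib sum_delta_mult diff_avg_mat_def)
  next
    case False
    then have i_n: "i = n"
      using i by simp
    have telescope: "(\<Sum>l<n. ?d l) = (if j = 0 then 1 else 0) - (if j = n then 1 else 0)"
      using sum_lessThan_telescope'[of "\<lambda>l. if j = l then 1 else (0::real)" n] by simp
    have "(\<Sum>l<Suc n. ((if l = i then 1 else 0) + (if i = n \<and> l < n then 1 / 2 else 0)) * ?d l)
        = (\<Sum>l<Suc n. (if l = n then 1 else 0) * ?d l) + (\<Sum>l<n. 1 / 2 * ?d l)"
      by (simp add: i_n distrib_right sum.distrib lessThan_Suc)
    also have "\<dots> = (if j = n then 1 else 0) + 1 / 2 * ((if j = 0 then 1 else 0) - (if j = n then 1 else 0))"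
      by (simp only: sum_delta_mult telescope flip: sum_distrib_left) (use j in auto)
    also have "\<dots> = diff_avg_mat n $$ (i, j)"
      using i_n j by (auto simp: diff_avg_mat_def)
    finally show ?thesis .
  qed
  finally show "(half_sum_row_mat n * diff_mat n) $$ (i, j) = diff_avg_mat n $$ (i, j)" .
qed (simp_all add: diff_avg_mat_def half_sum_row_mat_def diff_mat_def)

lemma det_diff_avg_mat: "det (diff_avg_mat n) = 1"
  using det_mult[OF half_sum_row_mat_carrier diff_mat_carrier, of n]
  by (simp add: half_sum_row_mat_mult_diff_mat det_diff_mat det_half_sum_row_mat)

lemma sum_diff_avg_mat_row:
  assumes "i < Suc n"
  shows "(\<Sum>l<Suc n. diff_avg_mat n $$ (i, l) * g l) = (if i < n then g i - g (Suc i) else (g 0 + g n) / 2)"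
proof -
  have "(\<Sum>l<Suc n. diff_avg_mat n $$ (i, l) * g l) =
      (\<Sum>l<Suc n. if i < n then (if l = i then 1 else 0) * g l - (if l = Suc i then 1 else 0) * g l
        else (if l = 0 then 1 / 2 else 0) * g l + (if l = n then 1 / 2 else 0) * g l)"
    by (rule sum.cong) (use assms in \<open>auto simp: diff_avg_mat_def\<close>)
  also have "\<dots> = (if i < n then g i - g (Suc i) else (g 0 + g n) / 2)"
    by (cases "i < n") (simp_all add: sum_subtractf sum.distrib sum_delta_mult)
  finally show ?thesis .
qed

lemma index_diff_avg_mat_mult:
  assumes "M \<in> carrier_mat (Suc n) c" "i < Suc n" "l < c"
  shows "(diff_avg_mat n * M) $$ (i, l) =
    (if i < n then M $$ (i, l) - M $$ (Suc i, l) else (M $$ (0, l) + M $$ (n, l)) / 2)"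
  unfolding index_mult_mat_sum[OF diff_avg_mat_carrier assms]
  by (rule sum_diff_avg_mat_row[OF assms(2)])

lemma index_mult_transpose_diff_avg_mat:
  assumes "M \<in> carrier_mat r (Suc n)" "i < r" "j < Suc n"
  shows "(M * (diff_avg_mat n)\<^sup>T) $$ (i, j) =
    (if j < n then M $$ (i, j) - M $$ (i, Suc j) else (M $$ (i, 0) + M $$ (i, n)) / 2)"
proof -
  have "(M * (diff_avg_mat n)\<^sup>T) $$ (i, j) = (\<Sum>l<Suc n. M $$ (i, l) * (diff_avg_mat n)\<^sup>T $$ (l, j))"
    by (rule index_mult_mat_sum) (use assms in simp_all)
  also have "\<dots> = (\<Sum>l<Suc n. diff_avg_mat n $$ (j, l) * M $$ (i, l))"
    by (rule sum.cong) (use assms in \<open>simp_all add: diff_avg_mat_def\<close>)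
  finally show ?thesis
    unfolding sum_diff_avg_mat_row[OF assms(3)] .
qed

definition char_entry :: "real \<Rightarrow> nat \<Rightarrow> nat \<Rightarrow> real" where
  "char_entry x a b = \<bar>real a - real b\<bar> / 2 - (if a = b then x else 0)"

lemma char_mat_carrier [simp]: "A_mat k - x \<cdot>\<^sub>m 1\<^sub>m k \<in> carrier_mat k k"
  unfolding carrier_mat_def by (simp add: A_mat_def)

lemma index_char_mat: "a < k \<Longrightarrow> b < k \<Longrightarrow> (A_mat k - x \<cdot>\<^sub>m 1\<^sub>m k) $$ (a, b) = char_entry x a b"
  by (simp add: A_mat_def char_entry_def)

lemma char_entry_second_difference:
  "(char_entry x i j - char_entry x (Suc i) j) - (char_entry x i (Suc j) - char_entry x (Suc i) (Suc j)) =
    (if i = j then - 1 - 2 * x else if Suc i = j \<or> Suc j = i then x else 0)"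
  by (cases i j rule: linorder_cases) (auto simp: char_entry_def abs_if field_simps)

lemma char_entry_border_row:
  "i < n \<Longrightarrow> (char_entry x i 0 - char_entry x (Suc i) 0 + (char_entry x i n - char_entry x (Suc i) n)) / 2
    = border_vec n x i"
  by (auto simp: char_entry_def abs_if border_vec_def field_simps)

lemma char_entry_border_col:
  "j < n \<Longrightarrow> (char_entry x 0 j + char_entry x n j) / 2 - (char_entry x 0 (Suc j) + char_entry x n (Suc j)) / 2
    = border_vec n x j"
  by (auto simp: char_entry_def abs_if border_vec_def field_simps)

lemma char_entry_corner:
  "0 < n \<Longrightarrow> ((char_entry x 0 0 + char_entry x n 0) / 2 + (char_entry x 0 n + char_entry x n n) / 2) / 2
    = real n / 4 - x / 2"
  by (auto simp: char_entry_def)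

lemma diff_avg_mat_congruence:
  assumes "1 \<le> n"
  shows "diff_avg_mat n * (A_mat (Suc n) - x \<cdot>\<^sub>m 1\<^sub>m (Suc n)) * (diff_avg_mat n)\<^sup>T = bordered_mat n x"
proof (rule eq_matI)
  let ?RM = "diff_avg_mat n * (A_mat (Suc n) - x \<cdot>\<^sub>m 1\<^sub>m (Suc n))"
  fix i j
  assume "i < dim_row (bordered_mat n x)" and "j < dim_col (bordered_mat n x)"
  then have i: "i < Suc n" and j: "j < Suc n"
    by (auto simp: bordered_mat_def)
  have RM: "?RM \<in> carrier_mat (Suc n) (Suc n)"
    by (rule mult_carrier_mat) auto
  have row: "?RM $$ (i, l) = (if i < n then char_entry x i l - char_entry x (Suc i) l
      else (char_entry x 0 l + char_entry x n l) / 2)" if "l < Suc n" for l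
  proof -
    have M: "(A_mat (Suc n) - x \<cdot>\<^sub>m 1\<^sub>m (Suc n)) $$ (a, l) = char_entry x a l" if "a < Suc n" for a
      using that \<open>l < Suc n\<close> by (rule index_char_mat)
    show ?thesis
      unfolding index_diff_avg_mat_mult[OF char_mat_carrier i that]
      using i by (simp add: M del: index_minus_mat)
  qed
  have "(?RM * (diff_avg_mat n)\<^sup>T) $$ (i, j) =
      (if j < n then ?RM $$ (i, j) - ?RM $$ (i, Suc j) else (?RM $$ (i, 0) + ?RM $$ (i, n)) / 2)"
    by (rule index_mult_transpose_diff_avg_mat[OF RM i j])
  also have "\<dots> = bordered_mat n x $$ (i, j)"
  proof (cases "i < n"; cases "j < n")
    assume "i < n" "j < n"
    then have "Suc j < Suc n" by simp
    with \<open>i < n\<close> \<open>j < n\<close> show ?thesis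
      unfolding row[OF j] row[OF \<open>Suc j < Suc n\<close>]
      by (simp add: bordered_mat_def tridiag_mat_def char_entry_second_difference)
  next
    assume "i < n" "\<not> j < n"
    with j show ?thesis
      unfolding row[of 0, simplified] row[of n, simplified]
      by (simp add: bordered_mat_def char_entry_border_row)
  next
    assume "\<not> i < n" "j < n"
    then have "Suc j < Suc n" by simp
    with i \<open>\<not> i < n\<close> \<open>j < n\<close> show ?thesis
      unfolding row[OF j] row[OF \<open>Suc j < Suc n\<close>]
      by (simp add: bordered_mat_def char_entry_border_col)
  next
    assume "\<not> i < n" "\<not> j < n"
    with i j assms show ?thesis
      unfolding row[of 0, simplified] row[of n, simplified]
      by (simp add: bordered_mat_def char_entry_corner)
  qed
  finally show "(?RM * (diff_avg_mat n)\<^sup>T) $$ (i, j) = bordered_mat n x $$ (i, j)" .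
qed (simp_all add: bordered_mat_def diff_avg_mat_def)

lemma C_charpoly_eq_det_bordered_mat:
  assumes "1 \<le> n"
  shows "C_charpoly (Suc n) x = det (bordered_mat n x)"
proof -
  let ?M = "A_mat (Suc n) - x \<cdot>\<^sub>m 1\<^sub>m (Suc n)"
  have RM: "diff_avg_mat n * ?M \<in> carrier_mat (Suc n) (Suc n)"
    by (rule mult_carrier_mat) auto
  have "det (bordered_mat n x) = det (diff_avg_mat n * ?M) * det ((diff_avg_mat n)\<^sup>T)"
    unfolding diff_avg_mat_congruence[OF assms, symmetric] by (rule det_mult[OF RM]) simp
  also have "\<dots> = det ?M"
    by (simp add: det_mult[OF diff_avg_mat_carrier char_mat_carrier]
        det_transpose[OF diff_avg_mat_carrier] det_diff_avg_mat)
  finally show ?thesis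
    by (simp add: C_charpoly_def)
qed

lemma det_bordered_mat_binom_polys:
  assumes "1 \<le> n"
  shows "det (bordered_mat n x) =
    (- 1) ^ Suc n * (x / 2 * even_binom_poly n x - real n / 4 * odd_binom_poly n x + x ^ Suc n / 2)"
proof -
  obtain m where n: "n = Suc m"
    using assms by (cases n) auto
  have odd_n: "odd_binom_poly n x = even_binom_poly n x + x * odd_binom_poly m x"
    using odd_binom_poly_Suc[of m x] n by simp
  have "det (bordered_mat n x) = (real n / 4 - x / 2) * ((- 1) ^ n * odd_binom_poly n x)
      - x ^ 2 / 2 * ((- 1) ^ m * odd_binom_poly m x) + (- 1) ^ Suc n * x ^ Suc n / 2"
    using det_bordered_mat[OF assms, of x] by (simp add: det_tridiag_mat_odd_binom_poly n)
  then show ?thesis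
    unfolding odd_n by (simp add: n algebra_simps power2_eq_square)
qed

lemma Suc_times_binomial_Suc_diff: "Suc k * (n choose Suc k) = (n - k) * (n choose k)"
  using binomial_absorption[of k n] binomial_absorb_comp[of n k] by simp

lemma binom_polys_combination:
  fixes x :: real
  shows "x / 2 * even_binom_poly n x - real n / 4 * odd_binom_poly n x + x ^ Suc n / 2 =
    x ^ Suc n - real (Suc n) / 4 *
      (\<Sum>j\<le>n. real j / real (j + 1) * real ((Suc n + j) choose (2 * j + 1)) * x ^ (n - j))"
proof -
  have coeff: "real ((n + 1 + j) choose (2 * j + 2)) / 2 - real n / 4 * real ((n + 1 + j) choose (2 * j + 1))
      = - (real (Suc n) / 4 * (real j / real (j + 1) * real ((n + 1 + j) choose (2 * j + 1))))"
    if "j \<le> n" for j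
  proof -
    have "(2 * j + 2) * ((n + 1 + j) choose (2 * j + 2)) = (n - j) * ((n + 1 + j) choose (2 * j + 1))"
      using Suc_times_binomial_Suc_diff[of "2 * j + 1" "n + 1 + j"] by (simp del: binomial_Suc_Suc)
    then have "real (2 * j + 2) * real ((n + 1 + j) choose (2 * j + 2))
        = real (n - j) * real ((n + 1 + j) choose (2 * j + 1))"
      by (metis of_nat_mult)
    then have "real ((n + 1 + j) choose (2 * j + 2))
        = (real n - real j) * real ((n + 1 + j) choose (2 * j + 1)) / (2 * real j + 2)"
      using that by (simp add: field_simps of_nat_diff)
    then show ?thesis
      by (simp add: field_simps)
  qed
  have "x / 2 * even_binom_poly n x = x ^ Suc n / 2 +
      (\<Sum>j\<le>n. real ((n + 1 + j) choose (2 * j + 2)) / 2 * x ^ (n - j))"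
    using times_even_binom_poly[of x n] by (simp add: sum_divide_distrib[symmetric] del: binomial_Suc_Suc)
  moreover have "real n / 4 * odd_binom_poly n x =
      (\<Sum>j\<le>n. real n / 4 * real ((n + 1 + j) choose (2 * j + 1)) * x ^ (n - j))"
    unfolding odd_binom_poly_def sum_distrib_left by (simp add: mult_ac del: binomial_Suc_Suc)
  ultimately have "x / 2 * even_binom_poly n x - real n / 4 * odd_binom_poly n x + x ^ Suc n / 2 =
      x ^ Suc n + (\<Sum>j\<le>n. (real ((n + 1 + j) choose (2 * j + 2)) / 2
        - real n / 4 * real ((n + 1 + j) choose (2 * j + 1))) * x ^ (n - j))"
    by (simp add: sum_subtractf left_diff_distrib del: binomial_Suc_Suc)
      (simp add: field_simps del: binomial_Suc_Suc)
  also have "\<dots> = x ^ Suc n + (\<Sum>j\<le>n. - (real (Suc n) / 4 *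
      (real j / real (j + 1) * real ((n + 1 + j) choose (2 * j + 1)))) * x ^ (n - j))"
    using coeff by (intro arg_cong[where f = "\<lambda>s. x ^ Suc n + s"] sum.cong) (simp_all del: binomial_Suc_Suc)
  finally show ?thesis
    by (simp add: sum_distrib_left sum_negf mult_ac del: binomial_Suc_Suc)
qed

lemma power_times_sum_inverse_powers:
  fixes x :: "'a::field"
  assumes "x \<noteq> 0"
  shows "x ^ Suc n * (\<Sum>j = 1..n. c j * inverse x ^ (j + 1)) = (\<Sum>j = 1..n. c j * x ^ (n - j))"
  unfolding sum_distrib_left
proof (rule sum.cong)
  fix j assume "j \<in> {1..n}"
  then have "x ^ Suc n = x ^ (n - j) * x ^ (j + 1)"
    by (simp flip: power_add)
  then show "x ^ Suc n * (c j * inverse x ^ (j + 1)) = c j * x ^ (n - j)"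
    using assms by (simp add: power_inverse field_simps)
qed simp

theorem theorem2p2:
  fixes k :: nat and x :: real
  assumes "k \<ge> 1" and "x \<noteq> 0"
  shows "C_charpoly k x =
    (-1) ^ k * x ^ k *
      (1 - real k / 4 * (\<Sum>j = 1..k - 1.
          real j / real (j + 1) * real ((k + j) choose (2 * j + 1)) * inverse x ^ (j + 1)))"
proof (cases "k = 1")
  case True
  have "C_charpoly 1 x = - x"
    unfolding C_charpoly_def by (subst det_single) (auto simp: A_mat_def)
  then show ?thesis
    using True by simp
next
  case False
  with assms obtain n where k: "k = Suc n" and n: "1 \<le> n"
    by (cases k) auto
  let ?c = "\<lambda>j. real j / real (j + 1) * real ((Suc n + j) choose (2 * j + 1))"
  have "(\<Sum>j\<le>n. ?c j * x ^ (n - j)) = (\<Sum>j = 1..n. ?c j * x ^ (n - j))"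
    by (rule sum.mono_neutral_right) auto
  then have "C_charpoly k x = (- 1) ^ k * (x ^ k - real k / 4 * (\<Sum>j = 1..n. ?c j * x ^ (n - j)))"
    using C_charpoly_eq_det_bordered_mat[OF n] det_bordered_mat_binom_polys[OF n]
      binom_polys_combination[of x n] k
    by simp
  also have "(\<Sum>j = 1..n. ?c j * x ^ (n - j)) = x ^ k * (\<Sum>j = 1..n. ?c j * inverse x ^ (j + 1))"
    using power_times_sum_inverse_powers[OF assms(2), of n ?c] k by simp
  also have "(- 1) ^ k * (x ^ k - real k / 4 * (x ^ k * (\<Sum>j = 1..n. ?c j * inverse x ^ (j + 1))))
      = (- 1) ^ k * x ^ k * (1 - real k / 4 * (\<Sum>j = 1..k - 1. ?c j * inverse x ^ (j + 1)))"
    by (simp add: k algebra_simps)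
  finally show ?thesis
    using k by simp
qed

end
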